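(* Assume the two standing hypotheses below hold, and let $\alpha\in\mathfrak A$. Let $(u_n,\,n\ge0)$ be a sequence of nonnegative real numbers such that $\sum_{n\ge0}\frac{u_n}{n!}|x|^n<+\infty$ for every $x\in\mathbb R$. Then for every compact $\Lambda\subset E$, $$\mathbb E_{\mu_{\alpha,K_\Lambda,\lambda}}\Big[\frac{u_{|\xi|}}{\det_\alpha J_{\Lambda,\alpha}(\xi)}\Big]<+\infty .$$ As a consequence, $\det_\alpha J_{\Lambda,\alpha}(\xi)$ is $\mu_{\alpha,K_\Lambda,\lambda}$-almost surely positive.
   Context: $E$ is a domain of $\mathbb R^d$ with a Radon measure $\lambda$. Hypothesis 1: $K$ is a bounded, symmetric, Hilbert–Schmidt integral operator on $L^2(E,\lambda)$ with kernel $K(x,y)$, spectrum in $[0,1)$, and $K_\Lambda=P_\Lambda KP_\Lambda$ trace class for every compact $\Lambda$ ($P_\Lambda f=f\mathbf 1_\Lambda$). Hypothesis 2: $\lambda=\rho\,m$ with $m$ the Lebesgue measure, $\rho$ weakly differentiable, and for every compact $\Lambda$, $\int_\Lambda(\|\nabla\rho(x)\|/\rho(x))^2K(x,x)\,\mathrm d\lambda(x)<\infty$. $\mathfrak A=\{2/m':m'\in\mathbb N\}\cup\{-1/m':m'\in\mathbb N\}$. $J_{\Lambda,\alpha}=(I+\alpha K_\Lambda)^{-1}K_\Lambda$ with kernel $J_{\Lambda,\alpha}(x,y)$. For an $n\times n$ matrix $A$, $\det_\alpha A=\sum_{\sigma\in\Sigma_n}\alpha^{n-\nu(\sigma)}\prod_i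 a_{i\sigma(i)}$, $\nu(\sigma)$ the number of cycles of $\sigma$. For a finite configuration $\xi=\{x_1,\dots,x_n\}$, $\det_\alpha J_{\Lambda,\alpha}(\xi)=\det_\alpha(J_{\Lambda,\alpha}(x_i,x_j))_{1\le i,j\le n}$ and $|\xi|=n$. $\mu_{\alpha,K_\Lambda,\lambda}$ is the $\alpha$-determinantal point process on $\Lambda$: the point process whose Janossy densities are $j^n(x_1,\dots,x_n)=\operatorname{Det}(I+\alpha K_\Lambda)^{-1/\alpha}\det_\alpha(J_{\Lambda,\alpha}(x_i,x_j))$, i.e. $\int F\,\mathrm d\mu_{\alpha,K_\Lambda,\lambda}=\sum_{n\ge0}\frac1{n!}\int_{\Lambda^n}F(\{x_1,\dots,x_n\})j^n(x_1,\dots,x_n)\,\mathrm d\lambda(x_1)\cdots\mathrm d\lambda(x_n)$ ($\operatorname{Det}$ the Fredholm determinant); equivalently its Laplace functional is $\operatorname{Det}(I+\alpha K_\Lambda[1-e^{-f}])^{-1/\alpha}$. *)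

theory Defs
  imports "HOL-Analysis.Analysis" "HOL-Combinatorics.Permutations"
begin

definition partial_along :: "'a::euclidean_space \<Rightarrow> ('a \<Rightarrow> real) \<Rightarrow> ('a \<Rightarrow> real)" where
  "partial_along v f = (\<lambda>x. frechet_derivative f (at x) v)"

definition smooth_fun :: "('a::euclidean_space \<Rightarrow> real) \<Rightarrow> bool" where
  "smooth_fun f \<longleftrightarrow> (\<forall>vs :: 'a list. \<forall>x. (foldr partial_along vs f) differentiable (at x))"

definition test_fun :: "'a::euclidean_space set \<Rightarrow> ('a \<Rightarrow> real) \<Rightarrow> bool" where
  "test_fun E f \<longleftrightarrow> smooth_fun f \<and> compact (closure {x. f x \<noteq> 0}) \<and> closure {x. f x \<noteq> 0} \<subseteq> E"

definition loc_integrable :: "'a::euclidean_space set \<Rightarrow> ('a \<Rightarrow> real) \<Rightarrow> bool" where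
  "loc_integrable E f \<longleftrightarrow> (\<forall>C. compact C \<and> C \<subseteq> E \<longrightarrow> set_integrable lborel C f)"

definition weak_gradient :: "'a::euclidean_space set \<Rightarrow> ('a \<Rightarrow> real) \<Rightarrow> ('a \<Rightarrow> 'a) \<Rightarrow> bool" where
  "weak_gradient E rho g \<longleftrightarrow>
     loc_integrable E rho \<and> (\<forall>i\<in>Basis. loc_integrable E (\<lambda>x. g x \<bullet> i)) \<and>
     (\<forall>\<phi>. test_fun E \<phi> \<longrightarrow> (\<forall>i\<in>Basis.
        (\<integral>x. rho x * frechet_derivative \<phi> (at x) i \<partial>lborel) = - (\<integral>x. (g x \<bullet> i) * \<phi> x \<partial>lborel)))"

definition L2 :: "'a measure \<Rightarrow> ('a \<Rightarrow> real) \<Rightarrow> bool" where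
  "L2 M f \<longleftrightarrow> f \<in> borel_measurable M \<and> integrable M (\<lambda>x. (f x)\<^sup>2)"

definition intop :: "'a measure \<Rightarrow> ('a \<Rightarrow> 'a \<Rightarrow> real) \<Rightarrow> ('a \<Rightarrow> real) \<Rightarrow> ('a \<Rightarrow> real)" where
  "intop M K f = (\<lambda>x. \<integral>y. K x y * f y \<partial>M)"

definition hilbert_schmidt_kernel :: "'a measure \<Rightarrow> ('a \<Rightarrow> 'a \<Rightarrow> real) \<Rightarrow> bool" where
  "hilbert_schmidt_kernel M K \<longleftrightarrow>
     (\<lambda>(x,y). K x y) \<in> borel_measurable (M \<Otimes>\<^sub>M M) \<and> integrable (M \<Otimes>\<^sub>M M) (\<lambda>(x,y). (K x y)\<^sup>2)"

definition op_spectrum :: "'a measure \<Rightarrow> (('a \<Rightarrow> real) \<Rightarrow> ('a \<Rightarrow> real)) \<Rightarrow> real set" where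
  "op_spectrum M T = {t. \<not> ((\<forall>f. L2 M f \<longrightarrow> (AE x in M. T f x - t * f x = 0) \<longrightarrow> (AE x in M. f x = 0))
                          \<and> (\<forall>g. L2 M g \<longrightarrow> (\<exists>f. L2 M f \<and> (AE x in M. T f x - t * f x = g x))))}"

definition restr_kernel :: "'a set \<Rightarrow> ('a \<Rightarrow> 'a \<Rightarrow> real) \<Rightarrow> 'a \<Rightarrow> 'a \<Rightarrow> real" where
  "restr_kernel \<Lambda> K x y = indicator \<Lambda> x * K x y * indicator \<Lambda> y"

definition spectral_rep :: "'a measure \<Rightarrow> (('a \<Rightarrow> real) \<Rightarrow> ('a \<Rightarrow> real)) \<Rightarrow> (nat \<Rightarrow> 'a \<Rightarrow> real) \<Rightarrow> (nat \<Rightarrow> real) \<Rightarrow> bool" where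
  "spectral_rep M T \<phi> \<mu> \<longleftrightarrow>
     (\<forall>k. L2 M (\<phi> k)) \<and>
     (\<forall>i j. \<mu> i \<noteq> 0 \<longrightarrow> \<mu> j \<noteq> 0 \<longrightarrow> (\<integral>x. \<phi> i x * \<phi> j x \<partial>M) = (if i = j then 1 else 0)) \<and>
     summable (\<lambda>k. \<bar>\<mu> k\<bar>) \<and>
     (\<forall>f. L2 M f \<longrightarrow> (AE x in M. T f x = (\<Sum>k. \<mu> k * (\<integral>y. f y * \<phi> k y \<partial>M) * \<phi> k x)))"

definition trace_class :: "'a measure \<Rightarrow> (('a \<Rightarrow> real) \<Rightarrow> ('a \<Rightarrow> real)) \<Rightarrow> bool" where
  "trace_class M T \<longleftrightarrow> (\<exists>\<phi> \<mu>. spectral_rep M T \<phi> \<mu>)"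

definition some_rep :: "'a measure \<Rightarrow> (('a \<Rightarrow> real) \<Rightarrow> ('a \<Rightarrow> real)) \<Rightarrow> (nat \<Rightarrow> 'a \<Rightarrow> real) \<times> (nat \<Rightarrow> real)" where
  "some_rep M T = (SOME p. spectral_rep M T (fst p) (snd p))"

definition fredholm_det :: "'a measure \<Rightarrow> (('a \<Rightarrow> real) \<Rightarrow> ('a \<Rightarrow> real)) \<Rightarrow> real \<Rightarrow> real" where
  "fredholm_det M T \<alpha> = (\<Prod>k. 1 + \<alpha> * snd (some_rep M T) k)"

text \<open>Kernel of (I + alpha T)^{-1} T, in its canonical eigen-expansion version.\<close>
definition resolvent_kernel :: "'a measure \<Rightarrow> (('a \<Rightarrow> real) \<Rightarrow> ('a \<Rightarrow> real)) \<Rightarrow> real \<Rightarrow> 'a \<Rightarrow> 'a \<Rightarrow> real" where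
  "resolvent_kernel M T \<alpha> x y =
     (let \<phi> = fst (some_rep M T); \<mu> = snd (some_rep M T)
      in (\<Sum>k. \<mu> k / (1 + \<alpha> * \<mu> k) * \<phi> k x * \<phi> k y))"

definition num_cycles :: "nat \<Rightarrow> (nat \<Rightarrow> nat) \<Rightarrow> nat" where
  "num_cycles n \<sigma> = card ((\<lambda>i. {j. \<exists>k. (\<sigma> ^^ k) i = j}) ` {..<n})"

definition alpha_det :: "real \<Rightarrow> nat \<Rightarrow> (nat \<Rightarrow> nat \<Rightarrow> real) \<Rightarrow> real" where
  "alpha_det \<alpha> n A = (\<Sum>\<sigma> | \<sigma> permutes {..<n}. \<alpha> ^ (n - num_cycles n \<sigma>) * (\<Prod>i<n. A i (\<sigma> i)))"

definition alpha_set :: "real set" where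
  "alpha_set = {2 / real m | m. m \<ge> 1} \<union> {- 1 / real m | m. m \<ge> 1}"

text \<open>A finite configuration {x_0,...,x_(n-1)} is represented by the pair (n, x) with
  x in the n-fold product of Lambda (labelled configurations, weighted by 1/n!).\<close>

definition conf_factor :: "'a measure \<Rightarrow> 'a set \<Rightarrow> nat \<Rightarrow> (nat \<Rightarrow> 'a) measure" where
  "conf_factor M \<Lambda> n = PiM {..<n} (\<lambda>_. restrict_space M \<Lambda>)"

definition conf_space :: "'a measure \<Rightarrow> 'a set \<Rightarrow> (nat \<times> (nat \<Rightarrow> 'a)) set" where
  "conf_space M \<Lambda> = Sigma UNIV (\<lambda>n. space (conf_factor M \<Lambda> n))"

definition conf_sets :: "'a measure \<Rightarrow> 'a set \<Rightarrow> (nat \<times> (nat \<Rightarrow> 'a)) set set" where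
  "conf_sets M \<Lambda> = {A. A \<subseteq> conf_space M \<Lambda> \<and>
      (\<forall>n. Pair n -` A \<inter> space (conf_factor M \<Lambda> n) \<in> sets (conf_factor M \<Lambda> n))}"

definition detJ :: "real \<Rightarrow> 'a measure \<Rightarrow> ('a \<Rightarrow> 'a \<Rightarrow> real) \<Rightarrow> 'a set \<Rightarrow> nat \<times> (nat \<Rightarrow> 'a) \<Rightarrow> real" where
  "detJ \<alpha> M K \<Lambda> \<xi> = alpha_det \<alpha> (fst \<xi>)
     (\<lambda>i j. resolvent_kernel M (intop M (restr_kernel \<Lambda> K)) \<alpha> (snd \<xi> i) (snd \<xi> j))"

definition janossy :: "real \<Rightarrow> 'a measure \<Rightarrow> ('a \<Rightarrow> 'a \<Rightarrow> real) \<Rightarrow> 'a set \<Rightarrow> nat \<times> (nat \<Rightarrow> 'a) \<Rightarrow> real" where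
  "janossy \<alpha> M K \<Lambda> \<xi> =
     fredholm_det M (intop M (restr_kernel \<Lambda> K)) \<alpha> powr (-1 / \<alpha>) * detJ \<alpha> M K \<Lambda> \<xi>"

definition alpha_dpp :: "real \<Rightarrow> ('a \<Rightarrow> 'a \<Rightarrow> real) \<Rightarrow> 'a set \<Rightarrow> 'a measure \<Rightarrow> (nat \<times> (nat \<Rightarrow> 'a)) measure" where
  "alpha_dpp \<alpha> K \<Lambda> M = measure_of (conf_space M \<Lambda>) (conf_sets M \<Lambda>)
     (\<lambda>A. \<Sum>n. ennreal (1 / fact n) *
        (\<integral>\<^sup>+ x. ennreal (janossy \<alpha> M K \<Lambda> (n, x)) * indicator A (n, x) \<partial>conf_factor M \<Lambda> n))"

end

theory Submission
  imports Defs
begin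

text \<open>On configurations with n points the process has density c * det_alpha J(xi) with respect to
  lambda^n / n!, where c = Det(I + alpha K_Lambda)^(-1/alpha) >= 0. Dividing by det_alpha J cancels
  the determinant, so E[u_|xi| / det_alpha J(xi)] <= c * (sum_n u_n lambda(Lambda)^n / n!), which is
  finite by the growth condition on u. Where det_alpha J <= 0 the density carries no mass, so
  det_alpha J is almost surely positive.\<close>

abbreviation conf_measure :: "'a measure \<Rightarrow> 'a set \<Rightarrow> ((nat \<times> (nat \<Rightarrow> 'a)) set \<Rightarrow> ennreal)
    \<Rightarrow> (nat \<times> (nat \<Rightarrow> 'a)) measure" where
  "conf_measure M \<Lambda> \<mu> \<equiv> measure_of (conf_space M \<Lambda>) (conf_sets M \<Lambda>) \<mu>"

lemma conf_sets_subset_Pow: "conf_sets M \<Lambda> \<subseteq> Pow (conf_space M \<Lambda>)"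
  by (auto simp: conf_sets_def)

lemma space_conf_measure: "space (conf_measure M \<Lambda> \<mu>) = conf_space M \<Lambda>"
  by (simp add: conf_sets_subset_Pow space_measure_of_conv)

lemma sets_conf_measure:
  "sets (conf_measure M \<Lambda> \<mu>) = sigma_sets (conf_space M \<Lambda>) (conf_sets M \<Lambda>)"
  by (simp add: conf_sets_subset_Pow sets_measure_of_conv)

lemma mem_conf_space_iff: "(n, x) \<in> conf_space M \<Lambda> \<longleftrightarrow> x \<in> space (conf_factor M \<Lambda> n)"
  by (simp add: conf_space_def)

lemma measurable_conf_measureI:
  assumes "\<And>n. (\<lambda>x. h (n, x)) \<in> measurable (conf_factor M \<Lambda> n) N"
  shows "h \<in> measurable (conf_measure M \<Lambda> \<mu>) N"
proof (rule measurableI)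
  fix \<xi> assume "\<xi> \<in> space (conf_measure M \<Lambda> \<mu>)"
  then show "h \<xi> \<in> space N"
    using measurable_space[OF assms] by (cases \<xi>) (auto simp: space_conf_measure mem_conf_space_iff)
next
  fix B assume B: "B \<in> sets N"
  have "Pair n -` (h -` B \<inter> conf_space M \<Lambda>) \<inter> space (conf_factor M \<Lambda> n)
      = (\<lambda>x. h (n, x)) -` B \<inter> space (conf_factor M \<Lambda> n)" for n
    by (auto simp: mem_conf_space_iff)
  then have "h -` B \<inter> conf_space M \<Lambda> \<in> conf_sets M \<Lambda>"
    using measurable_sets[OF assms B] by (auto simp: conf_sets_def)
  then show "h -` B \<inter> space (conf_measure M \<Lambda> \<mu>) \<in> sets (conf_measure M \<Lambda> \<mu>)"
    by (simp add: space_conf_measure sets_conf_measure)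
qed

lemma measurable_Pair_conf_measure:
  "Pair n \<in> measurable (conf_factor M \<Lambda> n) (conf_measure M \<Lambda> \<mu>)"
  by (rule measurable_measure_of[OF conf_sets_subset_Pow])
     (auto simp: mem_conf_space_iff conf_sets_def)

lemma nn_integral_suminf_measures:
  assumes sets_eq: "\<And>n. sets (\<nu> n) = sets N"
    and emeasure_eq: "\<And>A. A \<in> sets N \<Longrightarrow> emeasure N A = (\<Sum>n. emeasure (\<nu> n) A)"
    and f: "f \<in> borel_measurable N"
  shows "(\<integral>\<^sup>+x. f x \<partial>N) = (\<Sum>n. \<integral>\<^sup>+x. f x \<partial>\<nu> n)"
  using f
proof (induction f rule: borel_measurable_induct)
  case (cong f g)
  have "space (\<nu> n) = space N" for n
    using sets_eq_imp_space_eq[OF sets_eq] .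
  then have "(\<integral>\<^sup>+x. f x \<partial>\<nu> n) = (\<integral>\<^sup>+x. g x \<partial>\<nu> n)" for n
    using cong.hyps(3) by (intro nn_integral_cong) simp
  moreover have "(\<integral>\<^sup>+x. f x \<partial>N) = (\<integral>\<^sup>+x. g x \<partial>N)"
    using cong.hyps(3) by (intro nn_integral_cong) simp
  ultimately show ?case
    using cong.IH by simp
next
  case (set A)
  then show ?case by (simp add: emeasure_eq sets_eq)
next
  case (mult u c)
  have "u \<in> borel_measurable (\<nu> n)" for n
    using mult.hyps(2) by (simp add: measurable_cong_sets[OF sets_eq refl])
  with mult show ?case by (simp add: nn_integral_cmult)
next
  case (add u v)
  have "u \<in> borel_measurable (\<nu> n)" "v \<in> borel_measurable (\<nu> n)" for n
    using add.hyps(1,3) by (simp_all add: measurable_cong_sets[OF sets_eq refl])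
  with add show ?case by (simp add: nn_integral_add suminf_add[symmetric] summableI)
next
  case (seq U)
  have "U i \<in> borel_measurable (\<nu> n)" for i n
    using seq.hyps(1) by (simp add: measurable_cong_sets[OF sets_eq refl])
  then have SUP_\<nu>: "(\<integral>\<^sup>+x. (SUP i. U i x) \<partial>\<nu> n) = (SUP i. \<integral>\<^sup>+x. U i x \<partial>\<nu> n)" for n
    using seq.hyps(3) by (intro nn_integral_monotone_convergence_SUP) auto
  have "incseq (\<lambda>i. \<integral>\<^sup>+x. U i x \<partial>\<nu> n)" for n
    using seq.hyps(3) by (auto simp: incseq_def le_fun_def intro!: nn_integral_mono)
  then have "(\<Sum>n. SUP i. \<integral>\<^sup>+x. U i x \<partial>\<nu> n) = (SUP i. \<Sum>n. \<integral>\<^sup>+x. U i x \<partial>\<nu> n)"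
    by (rule ennreal_suminf_SUP_eq)
  moreover have "(\<integral>\<^sup>+x. (SUP i. U i x) \<partial>N) = (SUP i. \<integral>\<^sup>+x. U i x \<partial>N)"
    using seq.hyps(1,3) by (intro nn_integral_monotone_convergence_SUP) auto
  ultimately show ?case
    using seq.IH by (simp add: SUP_apply image_comp SUP_\<nu>)
qed

lemma nn_integral_conf_measure:
  fixes M :: "'a measure" and \<Lambda> :: "'a set"
    and c :: "nat \<Rightarrow> ennreal" and w :: "nat \<Rightarrow> (nat \<Rightarrow> 'a) \<Rightarrow> ennreal"
  defines "\<mu> \<equiv> \<lambda>A. \<Sum>n. c n * (\<integral>\<^sup>+x. w n x * indicator A (n, x) \<partial>conf_factor M \<Lambda> n)"
  assumes \<mu>: "measure_space (conf_space M \<Lambda>) (sigma_sets (conf_space M \<Lambda>) (conf_sets M \<Lambda>)) \<mu>"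
    and w: "\<And>n. w n \<in> borel_measurable (conf_factor M \<Lambda> n)"
    and f: "f \<in> borel_measurable (conf_measure M \<Lambda> \<mu>)"
  shows "(\<integral>\<^sup>+\<xi>. f \<xi> \<partial>conf_measure M \<Lambda> \<mu>)
    = (\<Sum>n. c n * (\<integral>\<^sup>+x. w n x * f (n, x) \<partial>conf_factor M \<Lambda> n))"
proof -
  let ?N = "conf_measure M \<Lambda> \<mu>"
  define \<nu> where "\<nu> n = distr (density (conf_factor M \<Lambda> n) (\<lambda>x. c n * w n x)) ?N (Pair n)" for n
  have Pair: "Pair n \<in> measurable (density (conf_factor M \<Lambda> n) (\<lambda>x. c n * w n x)) ?N" for n
    using measurable_Pair_conf_measure by simp
  have "emeasure (\<nu> n) A = c n * (\<integral>\<^sup>+x. w n x * indicator A (n, x) \<partial>conf_factor M \<Lambda> n)"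
    if A: "A \<in> sets ?N" for A n
  proof -
    have "emeasure (\<nu> n) A
        = (\<integral>\<^sup>+x. c n * w n x * indicator (Pair n -` A \<inter> space (conf_factor M \<Lambda> n)) x
            \<partial>conf_factor M \<Lambda> n)"
      using A measurable_sets[OF measurable_Pair_conf_measure A] w[of n]
      by (simp add: \<nu>_def emeasure_distr[OF Pair] emeasure_density ac_simps)
    also have "\<dots> = (\<integral>\<^sup>+x. c n * (w n x * indicator A (n, x)) \<partial>conf_factor M \<Lambda> n)"
      by (intro nn_integral_cong) (simp add: indicator_def)
    also have "\<dots> = c n * (\<integral>\<^sup>+x. w n x * indicator A (n, x) \<partial>conf_factor M \<Lambda> n)"
      using measurable_compose[OF measurable_Pair_conf_measure borel_measurable_indicator[OF A]] w
      by (intro nn_integral_cmult borel_measurable_times_ennreal) (auto simp: o_def)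
    finally show ?thesis .
  qed
  moreover have "emeasure ?N A = \<mu> A" if "A \<in> sets ?N" for A
    using that \<mu> by (simp add: emeasure_measure_of_conv sets_conf_measure)
  ultimately have "(\<integral>\<^sup>+\<xi>. f \<xi> \<partial>?N) = (\<Sum>n. \<integral>\<^sup>+\<xi>. f \<xi> \<partial>\<nu> n)"
    by (intro nn_integral_suminf_measures f) (auto simp: \<nu>_def \<mu>_def)
  also have "\<dots> = (\<Sum>n. c n * (\<integral>\<^sup>+x. w n x * f (n, x) \<partial>conf_factor M \<Lambda> n))"
  proof (intro suminf_cong)
    fix n
    have fn: "(\<lambda>x. f (n, x)) \<in> borel_measurable (conf_factor M \<Lambda> n)"
      using measurable_compose[OF measurable_Pair_conf_measure f] by (simp add: o_def)
    have "(\<integral>\<^sup>+\<xi>. f \<xi> \<partial>\<nu> n) = (\<integral>\<^sup>+x. c n * w n x * f (n, x) \<partial>conf_factor M \<Lambda> n)"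
      using f fn w[of n] by (simp add: \<nu>_def nn_integral_distr[OF Pair] nn_integral_density)
    also have "\<dots> = c n * (\<integral>\<^sup>+x. w n x * f (n, x) \<partial>conf_factor M \<Lambda> n)"
      using fn w[of n] by (simp add: nn_integral_cmult mult.assoc)
    finally show "(\<integral>\<^sup>+\<xi>. f \<xi> \<partial>\<nu> n) = c n * (\<integral>\<^sup>+x. w n x * f (n, x) \<partial>conf_factor M \<Lambda> n)" .
  qed
  finally show ?thesis .
qed


lemma nn_integral_conf_measure_le:
  fixes M :: "'a measure" and \<Lambda> :: "'a set"
    and c :: "nat \<Rightarrow> ennreal" and w :: "nat \<Rightarrow> (nat \<Rightarrow> 'a) \<Rightarrow> ennreal"
  defines "\<mu> \<equiv> \<lambda>A. \<Sum>n. c n * (\<integral>\<^sup>+x. w n x * indicator A (n, x) \<partial>conf_factor M \<Lambda> n)"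
  assumes w: "\<And>n. w n \<in> borel_measurable (conf_factor M \<Lambda> n)"
    and f: "f \<in> borel_measurable (conf_measure M \<Lambda> \<mu>)"
  shows "(\<integral>\<^sup>+\<xi>. f \<xi> \<partial>conf_measure M \<Lambda> \<mu>)
    \<le> (\<Sum>n. c n * (\<integral>\<^sup>+x. w n x * f (n, x) \<partial>conf_factor M \<Lambda> n))"
proof (cases "measure_space (conf_space M \<Lambda>) (sigma_sets (conf_space M \<Lambda>) (conf_sets M \<Lambda>)) \<mu>")
  case True
  then show ?thesis
    using nn_integral_conf_measure[OF _ w f[unfolded \<mu>_def]] by (simp add: \<mu>_def)
next
  case False
  \<comment> \<open>then \<open>measure_of\<close> degenerates to the zero measure\<close>
  then have "space (conf_measure M \<Lambda> \<mu>) \<in> null_sets (conf_measure M \<Lambda> \<mu>)"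
    by (simp add: null_sets_def emeasure_measure_of_conv)
  then have "AE \<xi> in conf_measure M \<Lambda> \<mu>. f \<xi> = 0"
    by (rule AE_I') auto
  then have "(\<integral>\<^sup>+\<xi>. f \<xi> \<partial>conf_measure M \<Lambda> \<mu>) = 0"
    using nn_integral_0_iff_AE[OF f] by simp
  then show ?thesis by simp
qed

lemma alpha_dpp_eq_conf_measure:
  "alpha_dpp \<alpha> K \<Lambda> M = conf_measure M \<Lambda> (\<lambda>A. \<Sum>n. ennreal (1 / fact n) *
     (\<integral>\<^sup>+x. ennreal (janossy \<alpha> M K \<Lambda> (n, x)) * indicator A (n, x) \<partial>conf_factor M \<Lambda> n))"
  by (simp add: alpha_dpp_def)

lemma borel_measurable_conf_factor_component:
  assumes "f \<in> borel_measurable M" "i < n"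
  shows "(\<lambda>x. f (x i)) \<in> borel_measurable (conf_factor M \<Lambda> n)"
  using measurable_compose[OF measurable_component_singleton[of i "{..<n}" "\<lambda>_. restrict_space M \<Lambda>"]
      measurable_restrict_space1[OF assms(1)]] assms(2)
  by (simp add: conf_factor_def o_def)

lemma spectral_rep_some_rep:
  assumes "trace_class M T"
  shows "spectral_rep M T (fst (some_rep M T)) (snd (some_rep M T))"
  using assms unfolding trace_class_def some_rep_def
  by (metis (mono_tags, lifting) prod.sel someI_ex)

lemma borel_measurable_detJ:
  assumes "trace_class M (intop M (restr_kernel \<Lambda> K))"
  shows "(\<lambda>x. detJ \<alpha> M K \<Lambda> (n, x)) \<in> borel_measurable (conf_factor M \<Lambda> n)"
proof -
  let ?T = "intop M (restr_kernel \<Lambda> K)"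
  have \<phi>: "fst (some_rep M ?T) k \<in> borel_measurable M" for k
    using spectral_rep_some_rep[OF assms] by (simp add: spectral_rep_def L2_def)
  have entry: "(\<lambda>x. resolvent_kernel M ?T \<alpha> (x i) (x j)) \<in> borel_measurable (conf_factor M \<Lambda> n)"
    if "i < n" "j < n" for i j
    unfolding resolvent_kernel_def Let_def
    by (intro borel_measurable_suminf borel_measurable_times borel_measurable_const
        borel_measurable_conf_factor_component \<phi> that)
  show ?thesis
    unfolding detJ_def alpha_det_def fst_conv snd_conv
    by (intro borel_measurable_sum borel_measurable_times borel_measurable_const
        borel_measurable_prod entry) (auto dest: permutes_in_image[THEN iffD2])
qed

lemma nn_integral_alpha_dpp_le:
  assumes T: "trace_class M (intop M (restr_kernel \<Lambda> K))"
    and g: "g \<in> borel_measurable (alpha_dpp \<alpha> K \<Lambda> M)"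
  shows "(\<integral>\<^sup>+\<xi>. g \<xi> \<partial>alpha_dpp \<alpha> K \<Lambda> M) \<le> (\<Sum>n. ennreal (1 / fact n) *
     (\<integral>\<^sup>+x. ennreal (janossy \<alpha> M K \<Lambda> (n, x)) * g (n, x) \<partial>conf_factor M \<Lambda> n))"
  unfolding alpha_dpp_eq_conf_measure
proof (rule nn_integral_conf_measure_le)
  show "(\<lambda>x. ennreal (janossy \<alpha> M K \<Lambda> (n, x))) \<in> borel_measurable (conf_factor M \<Lambda> n)" for n
    unfolding janossy_def using borel_measurable_detJ[OF T] by measurable
qed (use g in \<open>simp add: alpha_dpp_eq_conf_measure\<close>)

lemma emeasure_space_conf_factor:
  assumes \<Lambda>: "\<Lambda> \<in> sets M" "emeasure M \<Lambda> < \<infinity>"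
  shows "emeasure (conf_factor M \<Lambda> n) (space (conf_factor M \<Lambda> n)) = emeasure M \<Lambda> ^ n"
proof -
  have space: "space (restrict_space M \<Lambda>) = \<Lambda>"
    using sets.sets_into_space[OF \<Lambda>(1)] by (auto simp: space_restrict_space)
  have restrict: "emeasure (restrict_space M \<Lambda>) \<Lambda> = emeasure M \<Lambda>"
    using \<Lambda>(1) sets.sets_into_space[OF \<Lambda>(1)] by (intro emeasure_restrict_space) auto
  have "finite_measure (restrict_space M \<Lambda>)"
    using \<Lambda>(2) restrict space by (intro finite_measureI) auto
  then interpret product_sigma_finite "\<lambda>_::nat. restrict_space M \<Lambda>"
    by (intro product_sigma_finite.intro) (simp add: finite_measure_def)
  have "emeasure (conf_factor M \<Lambda> n) (space (conf_factor M \<Lambda> n))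
      = emeasure (PiM {..<n} (\<lambda>_. restrict_space M \<Lambda>)) (PiE {..<n} (\<lambda>_. \<Lambda>))"
    by (simp add: conf_factor_def space_PiM space)
  also have "\<dots> = (\<Prod>i<n. emeasure (restrict_space M \<Lambda>) \<Lambda>)"
    using space sets.top[of "restrict_space M \<Lambda>"] by (intro emeasure_PiM) auto
  finally show ?thesis
    using restrict by simp
qed

lemma AE_alpha_dpp_detJ_pos:
  assumes T: "trace_class M (intop M (restr_kernel \<Lambda> K))"
  shows "AE \<xi> in alpha_dpp \<alpha> K \<Lambda> M. detJ \<alpha> M K \<Lambda> \<xi> > 0"
proof (rule AE_I')
  let ?N = "alpha_dpp \<alpha> K \<Lambda> M"
  define Z where "Z = {\<xi> \<in> space ?N. detJ \<alpha> M K \<Lambda> \<xi> \<le> 0}"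
  have "detJ \<alpha> M K \<Lambda> \<in> borel_measurable ?N"
    unfolding alpha_dpp_eq_conf_measure
    by (rule measurable_conf_measureI) (rule borel_measurable_detJ[OF T])
  then have Z: "Z \<in> sets ?N"
    unfolding Z_def by measurable
  \<comment> \<open>the prefactor \<open>fredholm_det \<dots> powr (-1 / \<alpha>)\<close> is nonnegative\<close>
  have no_mass: "ennreal (janossy \<alpha> M K \<Lambda> (n, x)) * indicator Z (n, x) = 0" for n x
    by (auto simp: Z_def janossy_def mult_nonneg_nonpos ennreal_neg indicator_def)
  have "emeasure ?N Z \<le> 0"
    using nn_integral_alpha_dpp_le[OF T borel_measurable_indicator[OF Z]] Z
    unfolding no_mass by simp
  with Z show "Z \<in> null_sets ?N"
    by (simp add: null_sets_def)
  show "{\<xi> \<in> space ?N. \<not> detJ \<alpha> M K \<Lambda> \<xi> > 0} \<subseteq> Z"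
    by (auto simp: Z_def)
qed

lemma integrable_alpha_dpp_div_detJ:
  assumes T: "trace_class M (intop M (restr_kernel \<Lambda> K))"
    and \<Lambda>: "\<Lambda> \<in> sets M" "emeasure M \<Lambda> < \<infinity>"
    and u_nonneg: "\<And>n. u n \<ge> 0"
    and u_summable: "summable (\<lambda>n. u n / fact n * measure M \<Lambda> ^ n)"
  shows "integrable (alpha_dpp \<alpha> K \<Lambda> M) (\<lambda>\<xi>. u (fst \<xi>) / detJ \<alpha> M K \<Lambda> \<xi>)"
proof (rule integrableI_bounded)
  let ?N = "alpha_dpp \<alpha> K \<Lambda> M" and ?f = "\<lambda>\<xi>. u (fst \<xi>) / detJ \<alpha> M K \<Lambda> \<xi>"
  define c where "c = fredholm_det M (intop M (restr_kernel \<Lambda> K)) \<alpha> powr (-1 / \<alpha>)"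
  define l where "l = measure M \<Lambda>"
  show f: "?f \<in> borel_measurable ?N"
    unfolding alpha_dpp_eq_conf_measure
    by (rule measurable_conf_measureI)
      (simp add: borel_measurable_divide borel_measurable_detJ[OF T])
  have density_bound:
    "ennreal (janossy \<alpha> M K \<Lambda> (n, x)) * ennreal (norm (?f (n, x))) \<le> ennreal (c * u n)" for n x
  proof (cases "detJ \<alpha> M K \<Lambda> (n, x) > 0")
    case True
    then show ?thesis
      using u_nonneg[of n] by (simp add: janossy_def c_def ennreal_mult''[symmetric])
  next
    case False
    then show ?thesis
      by (simp add: janossy_def mult_nonneg_nonpos ennreal_neg)
  qed
  have "(\<integral>\<^sup>+\<xi>. ennreal (norm (?f \<xi>)) \<partial>?N) \<le> (\<Sum>n. ennreal (1 / fact n) *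
      (\<integral>\<^sup>+x. ennreal (janossy \<alpha> M K \<Lambda> (n, x)) * ennreal (norm (?f (n, x))) \<partial>conf_factor M \<Lambda> n))"
    using measurable_compose[OF f borel_measurable_norm]
    by (intro nn_integral_alpha_dpp_le[OF T] measurable_compose_rev[OF measurable_ennreal]) simp
  also have "\<dots> \<le> (\<Sum>n. ennreal (1 / fact n) * (\<integral>\<^sup>+x. ennreal (c * u n) \<partial>conf_factor M \<Lambda> n))"
    using density_bound by (intro suminf_le mult_left_mono nn_integral_mono) auto
  also have "\<dots> = (\<Sum>n. ennreal (c * (u n / fact n * l ^ n)))"
    using emeasure_space_conf_factor[OF \<Lambda>] \<Lambda>(2) u_nonneg
    by (simp add: l_def c_def emeasure_eq_ennreal_measure ennreal_power ennreal_mult'[symmetric]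
        field_simps)
  also have "\<dots> = ennreal (\<Sum>n. c * (u n / fact n * l ^ n))"
    using u_summable u_nonneg by (intro suminf_ennreal2 summable_mult) (auto simp: c_def l_def)
  finally show "(\<integral>\<^sup>+\<xi>. ennreal (norm (?f \<xi>)) \<partial>?N) < \<infinity>"
    by (simp add: order_le_less_trans)
qed

lemma emeasure_density_lborel_lt_top:
  fixes \<rho> :: "'a::euclidean_space \<Rightarrow> real"
  assumes "set_integrable lborel \<Lambda> \<rho>"
  shows "emeasure (density lborel (\<lambda>x. ennreal (indicator E x * \<rho> x))) \<Lambda> < \<infinity>"
proof -
  have "emeasure (density lborel (\<lambda>x. ennreal (indicator E x * \<rho> x))) \<Lambda>
      \<le> (\<integral>\<^sup>+x. ennreal (indicator E x * \<rho> x) * indicator \<Lambda> x \<partial>lborel)"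
    by (auto simp: density_def emeasure_measure_of_conv)
  also have "\<dots> \<le> (\<integral>\<^sup>+x. ennreal (norm (indicator \<Lambda> x *\<^sub>R \<rho> x)) \<partial>lborel)"
    by (intro nn_integral_mono) (auto simp: indicator_def)
  also have "\<dots> < \<infinity>"
    using assms by (simp add: set_integrable_def integrable_iff_bounded)
  finally show ?thesis .
qed

theorem mainTheorem6:
  fixes E :: "'a::euclidean_space set"
    and rho :: "'a \<Rightarrow> real"
    and lam :: "'a measure"
    and K :: "'a \<Rightarrow> 'a \<Rightarrow> real"
    and \<alpha> :: real
    and u :: "nat \<Rightarrow> real"
  assumes E_domain: "open E" "connected E"
    and lam_def: "lam = density lborel (\<lambda>x. ennreal (indicator E x * rho x))"
    and rho_nonneg: "AE x in lborel. x \<in> E \<longrightarrow> rho x \<ge> 0"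
    and hyp2: "\<exists>g. weak_gradient E rho g \<and>
                 (\<forall>\<Lambda>. compact \<Lambda> \<and> \<Lambda> \<subseteq> E \<longrightarrow>
                    set_integrable lam \<Lambda> (\<lambda>x. (norm (g x) / rho x)\<^sup>2 * K x x))"
    and K_HS: "hilbert_schmidt_kernel lam K"
    and K_sym: "\<forall>x\<in>E. \<forall>y\<in>E. K x y = K y x"
    and K_spec: "op_spectrum lam (intop lam K) \<subseteq> {0..<1}"
    and K_tr: "\<forall>\<Lambda>. compact \<Lambda> \<and> \<Lambda> \<subseteq> E \<longrightarrow> trace_class lam (intop lam (restr_kernel \<Lambda> K))"
    and alpha: "\<alpha> \<in> alpha_set"
    and u_nonneg: "\<forall>n. u n \<ge> 0"
    and u_summ: "\<forall>x::real. summable (\<lambda>n. u n / fact n * \<bar>x\<bar> ^ n)"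
  shows "\<forall>\<Lambda>. compact \<Lambda> \<and> \<Lambda> \<subseteq> E \<longrightarrow>
           integrable (alpha_dpp \<alpha> K \<Lambda> lam) (\<lambda>\<xi>. u (fst \<xi>) / detJ \<alpha> lam K \<Lambda> \<xi>)
         \<and> (AE \<xi> in alpha_dpp \<alpha> K \<Lambda> lam. detJ \<alpha> lam K \<Lambda> \<xi> > 0)"
proof (intro allI impI conjI)
  fix \<Lambda> assume \<Lambda>: "compact \<Lambda> \<and> \<Lambda> \<subseteq> E"
  have T: "trace_class lam (intop lam (restr_kernel \<Lambda> K))"
    using K_tr \<Lambda> by blast
  have \<Lambda>_sets: "\<Lambda> \<in> sets lam"
    using \<Lambda> by (simp add: lam_def compact_imp_closed borel_closed)
  have "set_integrable lborel \<Lambda> rho"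
    using hyp2 \<Lambda> by (auto simp: weak_gradient_def loc_integrable_def)
  then have \<Lambda>_finite: "emeasure lam \<Lambda> < \<infinity>"
    unfolding lam_def by (rule emeasure_density_lborel_lt_top)
  show "integrable (alpha_dpp \<alpha> K \<Lambda> lam) (\<lambda>\<xi>. u (fst \<xi>) / detJ \<alpha> lam K \<Lambda> \<xi>)"
    using u_nonneg u_summ[rule_format, of "measure lam \<Lambda>"]
    by (intro integrable_alpha_dpp_div_detJ[OF T \<Lambda>_sets \<Lambda>_finite]) auto
  show "AE \<xi> in alpha_dpp \<alpha> K \<Lambda> lam. detJ \<alpha> lam K \<Lambda> \<xi> > 0"
    by (rule AE_alpha_dpp_detJ_pos[OF T])
qed

end
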